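(* Let $p>2$ be prime, $\mathcal{C}$ a $\mathbb{Z}_p\mathbb{Z}_{p^2}$-additive code and $C=\Phi(\mathcal{C})$. Then $$K(C)=\{\Phi(\mathbf{u})\mid \mathbf{u}\in\mathcal{C}\ \text{and}\ pP'(\mathbf{u},\mathbf{v})\in\mathcal{C}\ \text{for all}\ \mathbf{v}\in\mathcal{C}\}.$$
   Context: A $\mathbb{Z}_p\mathbb{Z}_{p^2}$-additive code is a subgroup $\mathcal{C}$ of $\mathbb{Z}_p^\alpha\times\mathbb{Z}_{p^2}^\beta$. The Gray map $\phi:\mathbb{Z}_{p^2}\to\mathbb{Z}_p^p$ is $\phi(\theta)=\theta''(1,\ldots,1)+\theta'(0,1,\ldots,p-1)$ with $\theta=\theta''p+\theta'$, $\theta',\theta''\in\{0,\ldots,p-1\}$, and $\Phi(\mathbf{x},\mathbf{y})=(\mathbf{x},\phi(y_1),\ldots,\phi(y_\beta))$. For $C\subseteq\mathbb{Z}_p^n$, the kernel is $K(C)=\{\mathbf{x}\in\mathbb{Z}_p^n\mid C+\mathbf{x}=C\}$. For $\mathbf{u},\mathbf{v}\in\mathbb{Z}_p^\alpha\times\mathbb{Z}_{p^2}^\beta$ with $u_i=u_i''p+u_i'$, $v_i=v_i''p+v_i'$ ($u_i',v_i'\in\{0,\ldots,p-1\}$) for $i>\alpha$, $pP'(\mathbf{u},\mathbf{v})$ is the vector with zeros in the first $\alpha$ coordinates and, in coordinate $i>\alpha$, the value $p(p-1)\in\mathbb{Z}_{p^2}$ if $u_i'+v_i'\ge p$ and $0$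 otherwise. *)

theory Defs
  imports "HOL-Computational_Algebra.Primes"
begin

(* Vectors over Z_m of length n: functions nat => int with entries in {0..m-1}
   at indices < n and zero at all other indices. *)
definition vecs :: "int \<Rightarrow> nat \<Rightarrow> (nat \<Rightarrow> int) set" where
  "vecs m n = {x. (\<forall>i<n. 0 \<le> x i \<and> x i < m) \<and> (\<forall>i. n \<le> i \<longrightarrow> x i = 0)}"

definition vadd :: "int \<Rightarrow> (nat \<Rightarrow> int) \<Rightarrow> (nat \<Rightarrow> int) \<Rightarrow> (nat \<Rightarrow> int)" where
  "vadd m x y = (\<lambda>i. (x i + y i) mod m)"

definition mixed_space :: "int \<Rightarrow> nat \<Rightarrow> nat \<Rightarrow> ((nat \<Rightarrow> int) \<times> (nat \<Rightarrow> int)) set" where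
  "mixed_space p \<alpha> \<beta> = vecs p \<alpha> \<times> vecs (p^2) \<beta>"

definition madd :: "int \<Rightarrow> ((nat \<Rightarrow> int) \<times> (nat \<Rightarrow> int)) \<Rightarrow> ((nat \<Rightarrow> int) \<times> (nat \<Rightarrow> int))
    \<Rightarrow> ((nat \<Rightarrow> int) \<times> (nat \<Rightarrow> int))" where
  "madd p u v = (vadd p (fst u) (fst v), vadd (p^2) (snd u) (snd v))"

definition mneg :: "int \<Rightarrow> ((nat \<Rightarrow> int) \<times> (nat \<Rightarrow> int)) \<Rightarrow> ((nat \<Rightarrow> int) \<times> (nat \<Rightarrow> int))" where
  "mneg p u = ((\<lambda>i. (- fst u i) mod p), (\<lambda>i. (- snd u i) mod (p^2)))"

definition additive_code :: "int \<Rightarrow> nat \<Rightarrow> nat \<Rightarrow> ((nat \<Rightarrow> int) \<times> (nat \<Rightarrow> int)) set \<Rightarrow> bool" where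
  "additive_code p \<alpha> \<beta> C \<longleftrightarrow> C \<subseteq> mixed_space p \<alpha> \<beta> \<and> ((\<lambda>i. 0), (\<lambda>i. 0)) \<in> C \<and>
     (\<forall>u\<in>C. \<forall>v\<in>C. madd p u v \<in> C) \<and> (\<forall>u\<in>C. mneg p u \<in> C)"

(* Gray map phi : Z_{p^2} -> Z_p^p, theta = theta'' p + theta';
   k-th coordinate (k = 0..p-1) is theta'' + theta' * k mod p *)
definition gray :: "int \<Rightarrow> int \<Rightarrow> nat \<Rightarrow> int" where
  "gray p \<theta> k = (\<theta> div p + (\<theta> mod p) * int k) mod p"

(* Phi(x,y) = (x, phi(y_1), ..., phi(y_beta)) in Z_p^(alpha + p beta), 0-indexed *)
definition Phi :: "int \<Rightarrow> nat \<Rightarrow> nat \<Rightarrow> ((nat \<Rightarrow> int) \<times> (nat \<Rightarrow> int)) \<Rightarrow> (nat \<Rightarrow> int)" where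
  "Phi p \<alpha> \<beta> u = (\<lambda>i. if i < \<alpha> then fst u i
       else if i < \<alpha> + nat p * \<beta> then gray p (snd u ((i - \<alpha>) div nat p)) ((i - \<alpha>) mod nat p)
       else 0)"

definition code_kernel :: "int \<Rightarrow> nat \<Rightarrow> (nat \<Rightarrow> int) set \<Rightarrow> (nat \<Rightarrow> int) set" where
  "code_kernel p n C = {x \<in> vecs p n. (\<lambda>c. vadd p c x) ` C = C}"

definition pP' :: "int \<Rightarrow> nat \<Rightarrow> ((nat \<Rightarrow> int) \<times> (nat \<Rightarrow> int)) \<Rightarrow> ((nat \<Rightarrow> int) \<times> (nat \<Rightarrow> int))
    \<Rightarrow> ((nat \<Rightarrow> int) \<times> (nat \<Rightarrow> int))" where
  "pP' p \<beta> u v = ((\<lambda>i. 0),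
     (\<lambda>i. if i < \<beta> \<and> snd u i mod p + snd v i mod p \<ge> p then p * (p - 1) else 0))"


end

theory Submission
  imports Defs
begin

text \<open>
  Write \<open>\<theta> = \<theta>'' p + \<theta>'\<close>. The Gray image of \<open>\<theta>\<close> is the affine map \<open>k \<mapsto> \<theta>'' + \<theta>' k\<close>
  on \<open>\<int>/p\<close>, so Gray images add by adding intercepts and slopes modulo \<open>p\<close>. Addition
  in \<open>\<int>/p\<^sup>2\<close> does the same except that it carries \<open>p\<close> into \<open>\<theta>''\<close> whenever
  \<open>u' + v' \<ge> p\<close>; adding \<open>p(p-1) \<equiv> -p\<close> at exactly those coordinates cancels the carry, whence
  \<open>\<Phi>(u + v + pP'(u,v)) = \<Phi>(u) + \<Phi>(v)\<close>. As \<open>\<Phi>\<close> is injective, \<open>\<Phi>(C) + \<Phi>(u) \<subseteq> \<Phi>(C)\<close> holds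
  iff \<open>u + v + pP'(u,v) \<in> C\<close> for all \<open>v \<in> C\<close>, i.e. iff all \<open>pP'(u,v) \<in> C\<close>; and a translation
  of \<open>(\<int>/p)\<^sup>n\<close> mapping a set into itself maps it onto itself, since its \<open>p\<close>-th power
  is the identity. Kernel vectors lie in \<open>\<Phi>(C)\<close> because \<open>0 \<in> C\<close>.
\<close>

lemma gray_mult_add:
  assumes "0 \<le> s" "s < p"
  shows "gray p (a * p + s) k = (a + s * int k) mod p"
  using assms by (simp add: gray_def)

lemma gray_mod_square:
  assumes "p > 0"
  shows "gray p (t mod p\<^sup>2) k = gray p t k"
proof -
  have "t mod p\<^sup>2 = (t div p mod p) * p + t mod p"
    using zmod_zmult2_eq[of p t p] assms by (simp add: power2_eq_square mult.commute)
  then have "gray p (t mod p\<^sup>2) k = (t div p mod p + t mod p * int k) mod p"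
    using gray_mult_add[of "t mod p" p "t div p mod p" k] assms by simp
  also have "\<dots> = gray p t k"
    by (simp add: gray_def mod_add_left_eq)
  finally show ?thesis .
qed

lemma gray_add_carry:
  assumes "p > 0"
  shows "gray p (((a + b) mod p\<^sup>2 + (if a mod p + b mod p \<ge> p then p * (p - 1) else 0)) mod p\<^sup>2) k
       = (gray p a k + gray p b k) mod p"
    (is "gray p ((_ + ?c) mod _) k = _")
proof -
  let ?s = "a mod p + b mod p"
  have lhs: "gray p (((a + b) mod p\<^sup>2 + ?c) mod p\<^sup>2) k = gray p (a + b + ?c) k"
    using gray_mod_square[OF assms] by (metis mod_add_left_eq)
  have rhs: "(gray p a k + gray p b k) mod p = (a div p + b div p + ?s * int k) mod p"
    unfolding gray_def by (simp add: mod_add_eq algebra_simps)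
  have ab: "a + b = (a div p + b div p) * p + ?s"
    by (simp add: algebra_simps)
  have s: "0 \<le> ?s" "?s < 2 * p"
    using pos_mod_sign[OF assms, of a] pos_mod_sign[OF assms, of b]
      pos_mod_bound[OF assms, of a] pos_mod_bound[OF assms, of b] by linarith+
  show ?thesis
  proof (cases "?s \<ge> p")
    case True
    have "a + b + ?c = (a div p + b div p + p) * p + (?s - p)"
      using True ab by (simp add: algebra_simps)
    then have "gray p (a + b + ?c) k = (a div p + b div p + p + (?s - p) * int k) mod p"
      using True s by (simp add: gray_mult_add)
    also have "\<dots> = (a div p + b div p + ?s * int k + p * (1 - int k)) mod p"
      by (simp add: algebra_simps)
    finally show ?thesis
      using lhs rhs by simp
  next
    case False
    then show ?thesis
      using lhs rhs ab s gray_mult_add[of ?s p] by simp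
  qed
qed

text \<open>Coordinates \<open>0\<close> and \<open>1\<close> of the Gray image recover \<open>\<theta>''\<close> and \<open>\<theta>''+\<theta>'\<close>.\<close>

lemma gray_decode:
  assumes "p > 0" "0 \<le> t" "t < p\<^sup>2"
  shows "t = p * gray p t 0 + (gray p t 1 - gray p t 0) mod p"
proof -
  have "t div p < p"
  proof (rule ccontr)
    assume "\<not> t div p < p"
    then have "p * p \<le> p * (t div p)"
      using assms by (simp add: mult_left_mono)
    also have "\<dots> \<le> t"
      using assms by (metis le_add_same_cancel1 mult_div_mod_eq pos_mod_sign)
    finally show False
      using assms by (simp add: power2_eq_square)
  qed
  then have gray0: "gray p t 0 = t div p"
    using assms by (simp add: gray_def pos_imp_zdiv_nonneg_iff)
  have "(gray p t 1 - gray p t 0) mod p = (t div p + t mod p - t div p) mod p"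
    unfolding gray0 by (simp add: gray_def mod_diff_left_eq)
  then show ?thesis
    using gray0 by simp
qed

lemma vecs_mod_eq: "m > 0 \<Longrightarrow> x \<in> vecs m n \<Longrightarrow> x i mod m = x i"
  unfolding vecs_def by (cases "i < n") auto

lemma madd_in_mixed_space:
  "p > 0 \<Longrightarrow> u \<in> mixed_space p \<alpha> \<beta> \<Longrightarrow> v \<in> mixed_space p \<alpha> \<beta>
    \<Longrightarrow> madd p u v \<in> mixed_space p \<alpha> \<beta>"
  unfolding mixed_space_def madd_def vadd_def vecs_def by auto

lemma madd_mneg_madd_cancel:
  assumes "p > 0" "v \<in> mixed_space p \<alpha> \<beta>"
  shows "madd p (mneg p u) (madd p u v) = v"
proof -
  have "((- x) mod m + (x + y) mod m) mod m = y mod m" for x y m :: int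
    by (metis add_minus_cancel mod_add_eq)
  then show ?thesis
    using assms vecs_mod_eq[of p "fst v"] vecs_mod_eq[of "p\<^sup>2" "snd v"]
    unfolding madd_def mneg_def vadd_def mixed_space_def by (auto simp: prod_eq_iff)
qed

lemma pP'_in_mixed_space: "p > 1 \<Longrightarrow> pP' p \<beta> u v \<in> mixed_space p \<alpha> \<beta>"
  unfolding mixed_space_def pP'_def vecs_def by (auto simp: power2_eq_square)

lemma Phi_in_vecs:
  "p > 0 \<Longrightarrow> u \<in> mixed_space p \<alpha> \<beta> \<Longrightarrow> Phi p \<alpha> \<beta> u \<in> vecs p (\<alpha> + nat p * \<beta>)"
  unfolding Phi_def vecs_def mixed_space_def gray_def by auto

lemma Phi_gray_block:
  assumes "p > 0" "j < \<beta>" "k < nat p"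
  shows "Phi p \<alpha> \<beta> u (\<alpha> + nat p * j + k) = gray p (snd u j) k"
proof -
  have "nat p * j + k < nat p * (j + 1)"
    using assms by simp
  also have "\<dots> \<le> nat p * \<beta>"
    using assms by (intro mult_le_mono2) simp
  finally show ?thesis
    using assms by (simp add: Phi_def)
qed

lemma Phi_madd_pP':
  assumes "p > 0"
  shows "Phi p \<alpha> \<beta> (madd p (madd p v u) (pP' p \<beta> u v))
    = vadd p (Phi p \<alpha> \<beta> v) (Phi p \<alpha> \<beta> u)"
proof
  fix i
  consider "i < \<alpha>" | "\<alpha> + nat p * \<beta> \<le> i"
    | j k where "j < \<beta>" "k < nat p" "i = \<alpha> + nat p * j + k"
  proof (cases "i < \<alpha> \<or> \<alpha> + nat p * \<beta> \<le> i")
    case False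
    then have "i - \<alpha> < nat p * \<beta>"
      by linarith
    then have "(i - \<alpha>) div nat p < \<beta>"
      by (simp add: less_mult_imp_div_less mult.commute)
    moreover have "(i - \<alpha>) mod nat p < nat p"
      using assms by simp
    moreover have "i = \<alpha> + nat p * ((i - \<alpha>) div nat p) + (i - \<alpha>) mod nat p"
      using False by simp
    ultimately show thesis
      by (rule that(3))
  qed auto
  then show "Phi p \<alpha> \<beta> (madd p (madd p v u) (pP' p \<beta> u v)) i
    = vadd p (Phi p \<alpha> \<beta> v) (Phi p \<alpha> \<beta> u) i"
  proof cases
    case (3 j k)
    then show ?thesis
      using assms gray_add_carry[of p "snd v j" "snd u j" k]
      by (simp add: Phi_gray_block madd_def vadd_def pP'_def add.commute[of "snd u j mod p"])
  qed (simp_all add: Phi_def madd_def vadd_def pP'_def)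
qed

lemma inj_on_Phi:
  assumes "p > 1"
  shows "inj_on (Phi p \<alpha> \<beta>) (mixed_space p \<alpha> \<beta>)"
proof
  fix u v assume u: "u \<in> mixed_space p \<alpha> \<beta>" and v: "v \<in> mixed_space p \<alpha> \<beta>"
    and eq: "Phi p \<alpha> \<beta> u = Phi p \<alpha> \<beta> v"
  have "fst u i = fst v i" for i
    using u v fun_cong[OF eq, of i] unfolding mixed_space_def vecs_def Phi_def
    by (cases "i < \<alpha>") auto
  moreover have "snd u j = snd v j" for j
  proof (cases "j < \<beta>")
    case True
    have "gray p (snd u j) k = gray p (snd v j) k" if "k < nat p" for k
      using fun_cong[OF eq, of "\<alpha> + nat p * j + k"] Phi_gray_block[of p j \<beta> k] True that assms
      by simp
    then have "gray p (snd u j) 0 = gray p (snd v j) 0" "gray p (snd u j) 1 = gray p (snd v j) 1"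
      using assms by auto
    moreover have "0 \<le> snd w j" "snd w j < p\<^sup>2" if "w \<in> mixed_space p \<alpha> \<beta>" for w
      using that True unfolding mixed_space_def vecs_def by auto
    ultimately show ?thesis
      using gray_decode[of p "snd u j"] gray_decode[of p "snd v j"] u v assms by simp
  next
    case False
    then show ?thesis
      using u v unfolding mixed_space_def vecs_def by auto
  qed
  ultimately show "u = v"
    by (simp add: prod_eq_iff fun_eq_iff)
qed

lemma additive_codeD:
  assumes "additive_code p \<alpha> \<beta> C"
  shows "C \<subseteq> mixed_space p \<alpha> \<beta>" "((\<lambda>i. 0), (\<lambda>i. 0)) \<in> C"
    and "u \<in> C \<Longrightarrow> v \<in> C \<Longrightarrow> madd p u v \<in> C" "u \<in> C \<Longrightarrow> mneg p u \<in> C"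
  using assms unfolding additive_code_def by auto

lemma vadd_image_eq_if_closed:
  assumes "p > 0" and S: "S \<subseteq> vecs p n" and closed: "\<And>c. c \<in> S \<Longrightarrow> vadd p c x \<in> S"
  shows "(\<lambda>c. vadd p c x) ` S = S"
proof
  show "(\<lambda>c. vadd p c x) ` S \<subseteq> S"
    using closed by auto
next
  show "S \<subseteq> (\<lambda>c. vadd p c x) ` S"
  proof
    fix c assume c: "c \<in> S"
    have multiple: "(\<lambda>i. (c i + int m * x i) mod p) \<in> S" for m
    proof (induction m)
      case 0
      then show ?case
        using c S vecs_mod_eq[OF \<open>p > 0\<close>] by auto
    next
      case (Suc m)
      then have "vadd p (\<lambda>i. (c i + int m * x i) mod p) x \<in> S"
        by (rule closed)
      then show ?case
        unfolding vadd_def mod_add_left_eq by (simp add: algebra_simps)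
    qed
    have "vadd p (\<lambda>i. (c i + int (nat p - 1) * x i) mod p) x = (\<lambda>i. (c i + x i * p) mod p)"
      unfolding vadd_def mod_add_left_eq using \<open>p > 0\<close> by (simp add: algebra_simps)
    also have "\<dots> = c"
      using c S vecs_mod_eq[OF \<open>p > 0\<close>] by auto
    finally show "c \<in> (\<lambda>c. vadd p c x) ` S"
      by (rule rev_image_eqI[OF multiple sym])
  qed
qed

lemma code_kernel_PhiD:
  assumes "p > 1" and C: "additive_code p \<alpha> \<beta> C"
    and x: "x \<in> code_kernel p (\<alpha> + nat p * \<beta>) (Phi p \<alpha> \<beta> ` C)"
  shows "x \<in> {Phi p \<alpha> \<beta> u | u. u \<in> C \<and> (\<forall>v\<in>C. pP' p \<beta> u v \<in> C)}"
proof -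
  note sub = additive_codeD(1)[OF C]
  have x_vecs: "x \<in> vecs p (\<alpha> + nat p * \<beta>)"
    and translate: "(\<lambda>c. vadd p c x) ` Phi p \<alpha> \<beta> ` C = Phi p \<alpha> \<beta> ` C"
    using x unfolding code_kernel_def by auto
  have "Phi p \<alpha> \<beta> ((\<lambda>i. 0), (\<lambda>i. 0)) = (\<lambda>i. 0)"
    by (simp add: Phi_def gray_def fun_eq_iff)
  then have "x = vadd p (Phi p \<alpha> \<beta> ((\<lambda>i. 0), (\<lambda>i. 0))) x"
    using vecs_mod_eq[OF _ x_vecs] \<open>p > 1\<close> by (simp add: vadd_def)
  then have "x \<in> (\<lambda>c. vadd p c x) ` Phi p \<alpha> \<beta> ` C"
    using additive_codeD(2)[OF C] by blast
  then obtain u where u: "u \<in> C" and xu: "x = Phi p \<alpha> \<beta> u"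
    unfolding translate by blast
  have "pP' p \<beta> u v \<in> C" if v: "v \<in> C" for v
  proof -
    let ?s = "madd p (madd p v u) (pP' p \<beta> u v)"
    obtain w where w: "w \<in> C" and "vadd p (Phi p \<alpha> \<beta> v) x = Phi p \<alpha> \<beta> w"
      using translate v by blast
    then have "Phi p \<alpha> \<beta> ?s = Phi p \<alpha> \<beta> w"
      using xu Phi_madd_pP' \<open>p > 1\<close> by simp
    moreover have "?s \<in> mixed_space p \<alpha> \<beta>"
      using u v sub \<open>p > 1\<close> madd_in_mixed_space pP'_in_mixed_space
      by (meson less_trans subsetD zero_less_one)
    moreover have "w \<in> mixed_space p \<alpha> \<beta>"
      using w sub by blast
    ultimately have "?s = w"
      by (rule inj_onD[OF inj_on_Phi[OF \<open>p > 1\<close>]])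
    have "pP' p \<beta> u v = madd p (mneg p (madd p v u)) ?s"
      using madd_mneg_madd_cancel[of p "pP' p \<beta> u v" \<alpha> \<beta> "madd p v u"]
        pP'_in_mixed_space[OF \<open>p > 1\<close>] \<open>p > 1\<close> by simp
    then show ?thesis
      using additive_codeD(3,4)[OF C] u v w \<open>?s = w\<close> by simp
  qed
  then show ?thesis
    using u xu by blast
qed

lemma Phi_in_code_kernelI:
  assumes "p > 1" and C: "additive_code p \<alpha> \<beta> C" and u: "u \<in> C"
    and pP'_mem: "\<forall>v\<in>C. pP' p \<beta> u v \<in> C"
  shows "Phi p \<alpha> \<beta> u \<in> code_kernel p (\<alpha> + nat p * \<beta>) (Phi p \<alpha> \<beta> ` C)"
proof -
  note sub = additive_codeD(1)[OF C]
  have u_vecs: "Phi p \<alpha> \<beta> u \<in> vecs p (\<alpha> + nat p * \<beta>)"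
    using u sub \<open>p > 1\<close> by (meson Phi_in_vecs subsetD less_trans zero_less_one)
  have "vadd p (Phi p \<alpha> \<beta> v) (Phi p \<alpha> \<beta> u) \<in> Phi p \<alpha> \<beta> ` C" if "v \<in> C" for v
  proof -
    have "madd p (madd p v u) (pP' p \<beta> u v) \<in> C"
      using additive_codeD(3)[OF C] pP'_mem u that by blast
    moreover have "vadd p (Phi p \<alpha> \<beta> v) (Phi p \<alpha> \<beta> u)
        = Phi p \<alpha> \<beta> (madd p (madd p v u) (pP' p \<beta> u v))"
      using Phi_madd_pP'[of p \<alpha> \<beta> v u] \<open>p > 1\<close> by simp
    ultimately show ?thesis
      by (rule rev_image_eqI)
  qed
  then have "(\<lambda>c. vadd p c (Phi p \<alpha> \<beta> u)) ` Phi p \<alpha> \<beta> ` C = Phi p \<alpha> \<beta> ` C"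
    using sub Phi_in_vecs \<open>p > 1\<close> by (intro vadd_image_eq_if_closed[of p _ "\<alpha> + nat p * \<beta>"]) auto
  then show ?thesis
    using u_vecs unfolding code_kernel_def by simp
qed

theorem lemma9:
  fixes p :: int and \<alpha> \<beta> :: nat and C :: "((nat \<Rightarrow> int) \<times> (nat \<Rightarrow> int)) set"
  assumes "prime p" and "p > 2" and "additive_code p \<alpha> \<beta> C"
  shows "code_kernel p (\<alpha> + nat p * \<beta>) (Phi p \<alpha> \<beta> ` C) =
         {Phi p \<alpha> \<beta> u | u. u \<in> C \<and> (\<forall>v\<in>C. pP' p \<beta> u v \<in> C)}"
proof -
  have "p > 1"
    using \<open>p > 2\<close> by simp
  then show ?thesis
    using code_kernel_PhiD[of p \<alpha> \<beta> C] Phi_in_code_kernelI[of p \<alpha> \<beta> C]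
      \<open>additive_code p \<alpha> \<beta> C\<close> by blast
qed

end
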